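(* Let $\omega\in\mathbb T^1\setminus\mathbb Q$, $f\in\mathcal V_\omega$, and let $\phi^+$ be a representative of the SNA of $f$. Let $\theta,\theta'\in\mathbb T^1$ with $d(\theta,\theta')<|E|/(4S)$ (where $|E|$ is the length of $E$), and suppose $\phi^+(\vartheta+\omega)=f_\vartheta(\phi^+(\vartheta))$ holds for every $\vartheta\in\{\theta+m\omega,\theta'+m\omega: m\in\mathbb Z\}$. For $n\in\mathbb N_0$ and $\eta,\eta'\in\mathbb T^1$ let $\wp^n(\eta,\eta')=\#\{m\in\mathbb Z: -1\le m<n-1,\ \phi^+(\eta+m\omega)\in C,\ \phi^+(\eta'+m\omega)\in C,\ \eta+m\omega\notin\mathcal I_0,\ \eta'+m\omega\notin\mathcal I_0\}$. Then for all $n\in\mathbb N$, $$d\big(\phi^+(\theta+n\omega),\phi^+(\theta'+n\omega)\big)\le\alpha^{2n-3\wp^n(\theta,\theta')}\,d\big(\phi^+(\theta),\phi^+(\theta')\big)+S\,d(\theta,\theta')\sum_{k=1}^n\alpha^{2(n-k)-3\wp^{n-k}(\theta+k\omega,\theta'+k\omega)}.$$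
   Context: Notation: $\mathbb T^1=\mathbb R/\mathbb Z$, $d$ the usual distance on $\mathbb T^1$, $\pi_1,\pi_2$ the coordinate projections of $\mathbb T^2=\mathbb T^1\times\mathbb T^1$, $\mathrm{Leb}$ Lebesgue measure on $\mathbb T^1$. Skew products: for irrational $\omega$, $\mathcal F_\omega$ is the set of $C^1$-diffeomorphisms $f$ of $\mathbb T^2$ homotopic to the identity of the form $f(\theta,x)=(\theta+\omega,f_\theta(x))$. Write $f^k_\theta(x)=\pi_2(f^k(\theta,x))$ for $k\in\mathbb Z$. Invariant graphs: a measurable $\phi:\mathbb T^1\to\mathbb T^1$ is an invariant graph if $f_\theta(\phi(\theta))=\phi(\theta+\omega)$ for Lebesgue-a.e. $\theta$; graphs agreeing a.e. are identified. Its Lyapunov exponent is $\lambda(\phi)=\int_{\mathbb T^1}\log|\partial_xf_\theta(\phi(\theta))|\,d\theta$. It is an SNA (resp. SNR) if $\lambda(\phi)<0$ (resp. $>0$) and there is no continuous function a.e. equal to $\phi$. The associated measure is $\mu_\phi(A)=\mathrm{Leb}(\pi_1(A\cap\Phi))$, $\Phi=\{(\theta,\phi(\theta))\}$. The class $\mathcal V_\omega$: $f\in\mathcal F_\omega$ belongs to $\mathcal V_\omega$ if the following hold for some choice of data. (i) There are disjoint closed intervals $C=[c^-,c^+]$, $E=[e^-,e^+]\subseteq\mathbb T^1$ and a set $\mathcal I_0\subseteq\mathbb T^1$ which is a union of $\mathcal N$ disjoint open intervals, and constants $\alpha>4$, $S>0$, such that: $f_\theta(x)\in\mathrm{int}(C)$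 whenever $x\notin(e^-,e^+)$ and $\theta\notin\mathcal I_0$; for all $\theta,\theta',x,x'$: $\alpha^{-2}d(x,x')\le d(f_\theta(x),f_\theta(x'))\le\alpha^2d(x,x')$ and $d(f_\theta(x),f_{\theta'}(x))\le S\,d(\theta,\theta')$; $|\partial_xf_\theta(x)|\le\alpha^{-1}$ for $x\in C$; $|\partial_xf_\theta(x)|\ge\alpha$ for $x\in E$. (ii) Integers $\kappa\ge2$, $K_0\ge1$, $K_n=K_0\kappa^n$, $b_0=1$, $b_n=(1-1/K_{n-1})b_{n-1}$, with $b=\lim_n b_n>\sqrt{5/6}$. A super-exponentially increasing integer sequence $(M_n)_{n\ge0}$ with $M_0\ge2$ and $M_{n+1}\le2\alpha^{M_n/16}$. A non-increasing positive sequence $(\varepsilon_n)$ with $\varepsilon_0\le1$ and $\varepsilon_{n+1}\le2\alpha^{-M_n/4}/s$ for a fixed $s>0$. Moreover $\alpha\ge\alpha_*$ and $\varepsilon_0\le\varepsilon_*$, where $\alpha_*>1,\varepsilon_*>0$ are thresholds guaranteeing $\sum_{n\ge0}(2K_nM_n+1)\mathcal N\varepsilon_n\le\sum_{n\ge0}\varepsilon_n^{1/2}<1/16$; and each component of $\mathcal I_0$ has length $<\varepsilon_0$. (iii) Critical regions: recursively $\mathcal A_n=(\mathcal I_n-(M_n-1)\omega)\times C$, $\mathcal B_n=(\mathcal I_n+(M_n+1)\omega)\times E$, $\mathcal I_{n+1}=\mathrm{int}\,\pi_1\big(f^{M_n-1}(\mathcal A_n)\cap f^{-(M_n+1)}(\mathcal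 B_n)\big)$. Let $\mathcal W_n^+=\bigcup_{j=0}^n\bigcup_{l=1}^{M_j+1}(\mathcal I_j+l\omega)$, $\mathcal W_n^-=\bigcup_{j=0}^n\bigcup_{l=-(M_j-1)}^{0}(\mathcal I_j+l\omega)$, $\mathcal W_{-1}^\pm=\emptyset$. For every $n\in\mathbb N$: $\mathcal I_j\ne\emptyset$ for $j\le n$; $\mathcal I_j\cap\bigcup_{k=1}^{2K_jM_j}(\mathcal I_j+k\omega)=\emptyset$ for $j=0,\dots,n$; $\big((\mathcal I_j-(M_j-1)\omega)\cup(\mathcal I_j+(M_j+1)\omega)\big)\cap(\mathcal W_{j-1}^+\cup\mathcal W_{j-1}^-)=\emptyset$ for $j=1,\dots,n$; and $\mathcal I_n$ has exactly $\mathcal N$ connected components, each of length $<\varepsilon_n$. (iv) $f$ has an SNA $\phi^+$ and an SNR $\phi^-$, and $\mu_{\phi^+},\mu_{\phi^-}$ are the only $f$-invariant ergodic probability measures. (v) $f$ is minimal. *)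

theory Defs
  imports "HOL-Probability.Probability"
begin

text \<open>Points of T^1 are represented by reals (taken modulo 1); subsets of T^1 by
  1-periodic subsets of R; the usual distance on T^1 is the distance to the nearest
  integer of the difference.\<close>

definition tdist :: "real \<Rightarrow> real \<Rightarrow> real" where
  "tdist x y = \<bar>(x - y) - of_int (round (x - y))\<bar>"

definition carc :: "real \<Rightarrow> real \<Rightarrow> real set" where
  "carc a b = {x. \<exists>k::int. a \<le> x + of_int k \<and> x + of_int k \<le> b}"

definition oarc :: "real \<Rightarrow> real \<Rightarrow> real set" where
  "oarc a b = {x. \<exists>k::int. a < x + of_int k \<and> x + of_int k < b}"

definition shift :: "real \<Rightarrow> real set \<Rightarrow> real set" where
  "shift c A = (\<lambda>t. t + c) ` A"

text \<open>U is a union of N pairwise disjoint open arcs, each of length < eps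
  (so, for eps \<le> 1, U has exactly N connected components, each of length < eps).\<close>
definition arc_union :: "nat \<Rightarrow> real \<Rightarrow> real set \<Rightarrow> bool" where
  "arc_union N eps U \<longleftrightarrow>
     (\<exists>a l :: nat \<Rightarrow> real.
        (\<forall>i<N. 0 < l i \<and> l i < eps) \<and>
        (\<forall>i<N. \<forall>j<N. i \<noteq> j \<longrightarrow> oarc (a i) (a i + l i) \<inter> oarc (a j) (a j + l j) = {}) \<and>
        U = (\<Union>i<N. oarc (a i) (a i + l i)))"

text \<open>A skew product f(theta,x) = (theta+omega, f_theta(x)) on T^2 is given by the lift
  g theta x of its fibre maps: g is 1-periodic in theta and of degree one in x
  (f homotopic to the identity), jointly C^1, each g theta is a bijection of R
  with nonvanishing derivative (so f is a C^1-diffeomorphism of T^2).\<close>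

definition Fmap :: "real \<Rightarrow> (real \<Rightarrow> real \<Rightarrow> real) \<Rightarrow> real \<times> real \<Rightarrow> real \<times> real" where
  "Fmap \<omega> g = (\<lambda>(t, x). (t + \<omega>, g t x))"

definition skew_class :: "real \<Rightarrow> (real \<Rightarrow> real \<Rightarrow> real) \<Rightarrow> bool" where
  "skew_class \<omega> g \<longleftrightarrow>
     \<omega> \<notin> \<rat> \<and>
     (\<forall>t x. g (t + 1) x = g t x) \<and>
     (\<forall>t x. g t (x + 1) = g t x + 1) \<and>
     (\<forall>t. bij (g t)) \<and>
     (\<exists>gt gx :: real \<Rightarrow> real \<Rightarrow> real.
        (\<forall>t x. ((\<lambda>p. g (fst p) (snd p)) has_derivative
                  (\<lambda>h. fst h * gt t x + snd h * gx t x)) (at (t, x))) \<and>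
        continuous_on UNIV (\<lambda>p. gt (fst p) (snd p)) \<and>
        continuous_on UNIV (\<lambda>p. gx (fst p) (snd p)) \<and>
        (\<forall>t x. gx t x \<noteq> 0))"

definition inv_graph :: "real \<Rightarrow> (real \<Rightarrow> real \<Rightarrow> real) \<Rightarrow> (real \<Rightarrow> real) \<Rightarrow> bool" where
  "inv_graph \<omega> g \<phi> \<longleftrightarrow>
     (\<forall>t. \<phi> (t + 1) = \<phi> t) \<and> \<phi> \<in> borel_measurable lebesgue \<and>
     (AE t in lebesgue. frac (g t (\<phi> t)) = frac (\<phi> (t + \<omega>)))"

definition lyap :: "(real \<Rightarrow> real \<Rightarrow> real) \<Rightarrow> (real \<Rightarrow> real) \<Rightarrow> real" where
  "lyap g \<phi> = (LINT t:{0..1}|lebesgue. ln \<bar>deriv (g t) (\<phi> t)\<bar>)"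

text \<open>phi agrees a.e. with a continuous map T^1 -> T^1 (given by a continuous lift psi
  with psi(t+1) = psi t + k).\<close>
definition ae_continuous :: "(real \<Rightarrow> real) \<Rightarrow> bool" where
  "ae_continuous \<phi> \<longleftrightarrow>
     (\<exists>\<psi> :: real \<Rightarrow> real. \<exists>k::int. continuous_on UNIV \<psi> \<and>
        (\<forall>t. \<psi> (t + 1) = \<psi> t + of_int k) \<and>
        (AE t in lebesgue. frac (\<psi> t) = frac (\<phi> t)))"

definition is_SNA :: "real \<Rightarrow> (real \<Rightarrow> real \<Rightarrow> real) \<Rightarrow> (real \<Rightarrow> real) \<Rightarrow> bool" where
  "is_SNA \<omega> g \<phi> \<longleftrightarrow> inv_graph \<omega> g \<phi> \<and> lyap g \<phi> < 0 \<and> \<not> ae_continuous \<phi>"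

definition is_SNR :: "real \<Rightarrow> (real \<Rightarrow> real \<Rightarrow> real) \<Rightarrow> (real \<Rightarrow> real) \<Rightarrow> bool" where
  "is_SNR \<omega> g \<phi> \<longleftrightarrow> inv_graph \<omega> g \<phi> \<and> lyap g \<phi> > 0 \<and> \<not> ae_continuous \<phi>"

definition torus2 :: "(real \<times> real) measure" where
  "torus2 = restrict_space borel ({0..<1} \<times> {0..<1})"

definition circle_leb :: "real measure" where
  "circle_leb = restrict_space lebesgue {0..<1}"

definition Tmap :: "real \<Rightarrow> (real \<Rightarrow> real \<Rightarrow> real) \<Rightarrow> real \<times> real \<Rightarrow> real \<times> real" where
  "Tmap \<omega> g = (\<lambda>(t, x). (frac (t + \<omega>), frac (g t x)))"

text \<open>mu_phi(A) = Leb(pi_1(A \<inter> Phi)) = Leb {theta. (theta, phi theta) \<in> A}.\<close>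
definition graph_measure :: "(real \<Rightarrow> real) \<Rightarrow> (real \<times> real) measure" where
  "graph_measure \<phi> = distr circle_leb torus2 (\<lambda>t. (t, frac (\<phi> t)))"

definition erg_inv :: "real \<Rightarrow> (real \<Rightarrow> real \<Rightarrow> real) \<Rightarrow> (real \<times> real) measure \<Rightarrow> bool" where
  "erg_inv \<omega> g \<mu> \<longleftrightarrow>
     prob_space \<mu> \<and> sets \<mu> = sets torus2 \<and>
     Tmap \<omega> g \<in> measurable \<mu> \<mu> \<and> distr \<mu> \<mu> (Tmap \<omega> g) = \<mu> \<and>
     (\<forall>A \<in> sets \<mu>. Tmap \<omega> g -` A \<inter> space \<mu> = A \<longrightarrow> emeasure \<mu> A = 0 \<or> emeasure \<mu> A = 1)"

definition minimal :: "real \<Rightarrow> (real \<Rightarrow> real \<Rightarrow> real) \<Rightarrow> bool" where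
  "minimal \<omega> g \<longleftrightarrow>
     (\<forall>p q. \<forall>e>0. \<exists>n::nat.
        (tdist (fst ((Fmap \<omega> g ^^ n) p)) (fst q) < e \<and> tdist (snd ((Fmap \<omega> g ^^ n) p)) (snd q) < e) \<or>
        (tdist (fst ((inv (Fmap \<omega> g) ^^ n) p)) (fst q) < e \<and> tdist (snd ((inv (Fmap \<omega> g) ^^ n) p)) (snd q) < e))"

fun Iseq :: "real \<Rightarrow> (real \<Rightarrow> real \<Rightarrow> real) \<Rightarrow> real set \<Rightarrow> real set \<Rightarrow> (nat \<Rightarrow> nat) \<Rightarrow> real set
             \<Rightarrow> nat \<Rightarrow> real set" where
  "Iseq \<omega> g C E M I0 0 = I0"
| "Iseq \<omega> g C E M I0 (Suc n) =
     interior (fst ` ((Fmap \<omega> g ^^ (M n - 1)) ` (shift (- (real (M n) - 1) * \<omega>) (Iseq \<omega> g C E M I0 n) \<times> C)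
                      \<inter> (Fmap \<omega> g ^^ (M n + 1)) -` (shift ((real (M n) + 1) * \<omega>) (Iseq \<omega> g C E M I0 n) \<times> E)))"

definition Wplus :: "real \<Rightarrow> (nat \<Rightarrow> real set) \<Rightarrow> (nat \<Rightarrow> nat) \<Rightarrow> nat \<Rightarrow> real set" where
  "Wplus \<omega> I M n = (\<Union>j\<le>n. \<Union>l\<in>{1..M j + 1}. shift (real l * \<omega>) (I j))"

definition Wminus :: "real \<Rightarrow> (nat \<Rightarrow> real set) \<Rightarrow> (nat \<Rightarrow> nat) \<Rightarrow> nat \<Rightarrow> real set" where
  "Wminus \<omega> I M n = (\<Union>j\<le>n. \<Union>l\<in>{- (int (M j) - 1)..0}. shift (of_int l * \<omega>) (I j))"

definition V_data ::
  "real \<Rightarrow> (real \<Rightarrow> real \<Rightarrow> real) \<Rightarrow> real \<Rightarrow> real \<Rightarrow> real \<Rightarrow> real \<Rightarrow> real set \<Rightarrow> nat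
   \<Rightarrow> real \<Rightarrow> real \<Rightarrow> nat \<Rightarrow> nat \<Rightarrow> (nat \<Rightarrow> nat) \<Rightarrow> (nat \<Rightarrow> real) \<Rightarrow> real
   \<Rightarrow> (real \<Rightarrow> real) \<Rightarrow> (real \<Rightarrow> real) \<Rightarrow> bool" where
  "V_data \<omega> g c1 c2 e1 e2 I0 N \<alpha> S \<kappa> K0 M \<epsilon> s phip phim \<longleftrightarrow>
     skew_class \<omega> g \<and>
     \<comment> \<open>(i)\<close>
     c1 < c2 \<and> c2 < c1 + 1 \<and> e1 < e2 \<and> e2 < e1 + 1 \<and> carc c1 c2 \<inter> carc e1 e2 = {} \<and>
     arc_union N (\<epsilon> 0) I0 \<and> \<alpha> > 4 \<and> S > 0 \<and>
     (\<forall>t x. x \<notin> oarc e1 e2 \<and> t \<notin> I0 \<longrightarrow> g t x \<in> oarc c1 c2) \<and>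
     (\<forall>t x x'. tdist x x' / \<alpha>\<^sup>2 \<le> tdist (g t x) (g t x') \<and> tdist (g t x) (g t x') \<le> \<alpha>\<^sup>2 * tdist x x') \<and>
     (\<forall>t t' x. tdist (g t x) (g t' x) \<le> S * tdist t t') \<and>
     (\<forall>t x. x \<in> carc c1 c2 \<longrightarrow> \<bar>deriv (g t) x\<bar> \<le> 1 / \<alpha>) \<and>
     (\<forall>t x. x \<in> carc e1 e2 \<longrightarrow> \<bar>deriv (g t) x\<bar> \<ge> \<alpha>) \<and>
     \<comment> \<open>(ii)\<close>
     \<kappa> \<ge> 2 \<and> K0 \<ge> 1 \<and>
     (\<exists>b. (\<lambda>n. \<Prod>j<n. (1 - 1 / real (K0 * \<kappa> ^ j))) \<longlonglongrightarrow> b \<and> b > sqrt (5 / 6)) \<and>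
     strict_mono M \<and> (\<forall>c>1. filterlim (\<lambda>n. real (M n) / c ^ n) at_top sequentially) \<and>
     M 0 \<ge> 2 \<and> (\<forall>n. real (M (Suc n)) \<le> 2 * \<alpha> powr (real (M n) / 16)) \<and>
     s > 0 \<and> decseq \<epsilon> \<and> (\<forall>n. \<epsilon> n > 0) \<and> \<epsilon> 0 \<le> 1 \<and>
     (\<forall>n. \<epsilon> (Suc n) \<le> 2 * \<alpha> powr (- real (M n) / 4) / s) \<and>
     summable (\<lambda>n. (2 * real (K0 * \<kappa> ^ n) * real (M n) + 1) * real N * \<epsilon> n) \<and>
     summable (\<lambda>n. sqrt (\<epsilon> n)) \<and>
     (\<Sum>n. (2 * real (K0 * \<kappa> ^ n) * real (M n) + 1) * real N * \<epsilon> n) \<le> (\<Sum>n. sqrt (\<epsilon> n)) \<and>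
     (\<Sum>n. sqrt (\<epsilon> n)) < 1 / 16 \<and>
     \<comment> \<open>(iii)\<close>
     (let I = Iseq \<omega> g (carc c1 c2) (carc e1 e2) M I0 in
       (\<forall>j. I j \<noteq> {}) \<and>
       (\<forall>j. I j \<inter> (\<Union>k\<in>{1..2 * (K0 * \<kappa> ^ j) * M j}. shift (real k * \<omega>) (I j)) = {}) \<and>
       (\<forall>j\<ge>1. (shift (- (real (M j) - 1) * \<omega>) (I j) \<union> shift ((real (M j) + 1) * \<omega>) (I j))
                 \<inter> (Wplus \<omega> I M (j - 1) \<union> Wminus \<omega> I M (j - 1)) = {}) \<and>
       (\<forall>n. arc_union N (\<epsilon> n) (I n))) \<and>
     \<comment> \<open>(iv)\<close>
     is_SNA \<omega> g phip \<and> is_SNR \<omega> g phim \<and>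
     (\<forall>\<mu>. erg_inv \<omega> g \<mu> \<longleftrightarrow> \<mu> = graph_measure phip \<or> \<mu> = graph_measure phim) \<and>
     \<comment> \<open>(v)\<close>
     minimal \<omega> g"

definition wp :: "real \<Rightarrow> (real \<Rightarrow> real) \<Rightarrow> real \<Rightarrow> real \<Rightarrow> real set \<Rightarrow> nat \<Rightarrow> real \<Rightarrow> real \<Rightarrow> nat" where
  "wp \<omega> \<phi> c1 c2 I0 n \<eta> \<eta>' =
     card {m::int. -1 \<le> m \<and> m < int n - 1 \<and>
                   \<phi> (\<eta> + of_int m * \<omega>) \<in> carc c1 c2 \<and> \<phi> (\<eta>' + of_int m * \<omega>) \<in> carc c1 c2 \<and>
                   \<eta> + of_int m * \<omega> \<notin> I0 \<and> \<eta>' + of_int m * \<omega> \<notin> I0}"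

end

theory Submission
  imports Defs
begin

text \<open>Along the two orbits, one step of the skew product changes the fibre distance by at most
  the factor \<open>\<alpha>\<^sup>2\<close>, plus the error \<open>S d(\<theta>,\<theta>')\<close> coming from the different base points. If at
  time \<open>m\<close> both graph points lie in \<open>C\<close> over base points outside \<open>\<I>\<^sub>0\<close>, both are mapped into
  \<open>int C\<close>; since their base points are closer than \<open>|E|/(4S)\<close> and \<open>C\<close> and \<open>E\<close> are disjoint
  arcs, the images even lie in the same lift of \<open>C\<close>, so the following fibre map contracts their
  distance by \<open>\<alpha>\<^sup>-\<^sup>1 = \<alpha>\<^sup>2\<^sup>-\<^sup>3\<close>. Unrolling this recursion gives the estimate.\<close>

lemma tdist_le_abs_diff_int: "tdist x y \<le> \<bar>x - y - of_int k\<bar>"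
  unfolding tdist_def by (rule round_diff_minimal)

lemma tdist_le_abs: "tdist x y \<le> \<bar>x - y\<bar>"
  using tdist_le_abs_diff_int[of x y 0] by simp

lemma tdist_commute: "tdist x y = tdist y x"
  using tdist_le_abs_diff_int[of x y "- round (y - x)"] tdist_le_abs_diff_int[of y x "- round (x - y)"]
  by (simp add: tdist_def abs_minus_commute)

lemma tdist_triangle: "tdist x z \<le> tdist x y + tdist y z"
proof -
  have "tdist x z \<le> \<bar>x - z - of_int (round (x - y) + round (y - z))\<bar>"
    by (rule tdist_le_abs_diff_int)
  also have "\<dots> \<le> tdist x y + tdist y z"
    unfolding tdist_def by simp
  finally show ?thesis .
qed

lemma tdist_add_int_left [simp]: "tdist (x + of_int k) y = tdist x y"
proof (rule antisym)
  show "tdist (x + of_int k) y \<le> tdist x y"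
    using tdist_le_abs_diff_int[of "x + of_int k" y "round (x - y) + k"] by (simp add: tdist_def)
  show "tdist x y \<le> tdist (x + of_int k) y"
    using tdist_le_abs_diff_int[of x y "round (x + of_int k - y) - k"]
    by (simp add: tdist_def algebra_simps)
qed

lemma tdist_add_int_right [simp]: "tdist x (y + of_int k) = tdist x y"
  by (metis tdist_add_int_left tdist_commute)

lemma tdist_translate: "tdist (x + c) (y + c) = tdist x y"
  by (simp add: tdist_def)

lemma tdist_eq_abs: "\<bar>x - y\<bar> < 1/2 \<Longrightarrow> tdist x y = \<bar>x - y\<bar>"
  unfolding tdist_def using round_unique'[of "x - y" 0] by simp

lemma frac_eq_imp_add_int: "frac a = frac b \<Longrightarrow> \<exists>k. a = b + of_int k"
  unfolding frac_def by (intro exI[of _ "\<lfloor>a\<rfloor> - \<lfloor>b\<rfloor>"]) simp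

lemma tdist_frac_cong:
  assumes "frac x = frac x'" "frac y = frac y'"
  shows "tdist x y = tdist x' y'"
proof -
  obtain k l where "x = x' + of_int k" "y = y' + of_int l"
    using frac_eq_imp_add_int[OF assms(1)] frac_eq_imp_add_int[OF assms(2)] by blast
  then show ?thesis by simp
qed

lemma degree_one_add_int:
  fixes h :: "real \<Rightarrow> real"
  assumes "\<And>x. h (x + 1) = h x + 1"
  shows "h (x + of_int k) = h x + of_int k"
proof (induction k rule: int_induct[where k = 0])
  case (step1 i)
  then show ?case using assms[of "x + of_int i"] by (simp add: add.assoc)
next
  case (step2 i)
  then show ?case using assms[of "x + of_int (i - 1)"] by (simp add: algebra_simps)
qed simp

lemma skew_class_fibre_deriv:
  assumes "skew_class \<omega> g"
  shows "(g t has_real_derivative deriv (g t) x) (at x)"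
proof -
  from assms obtain gt gx :: "real \<Rightarrow> real \<Rightarrow> real" where
    d: "((\<lambda>p. g (fst p) (snd p)) has_derivative (\<lambda>h. fst h * gt t x + snd h * gx t x)) (at (t, x))"
    unfolding skew_class_def by blast
  have "((\<lambda>y. (t, y)) has_derivative (\<lambda>h. (0, h))) (at x)"
    by (auto intro!: derivative_eq_intros)
  from has_derivative_compose[OF this d] have "(g t has_derivative (*) (gx t x)) (at x)"
    by (simp add: mult_commute_abs)
  then show ?thesis
    by (metis DERIV_imp_deriv has_field_derivative_def)
qed

lemma oarc_subset_carc: "oarc a b \<subseteq> carc a b"
  unfolding oarc_def carc_def by (auto intro: less_imp_le)

lemma mem_carc_if_between: "a \<le> x \<Longrightarrow> x \<le> b \<Longrightarrow> x \<in> carc a b"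
  unfolding carc_def by (auto intro: exI[of _ 0])

lemma carc_length_add_lt_1:
  assumes "c1 < c2" "c2 < c1 + 1" "e1 < e2" "e2 < e1 + 1" "carc c1 c2 \<inter> carc e1 e2 = {}"
  shows "(c2 - c1) + (e2 - e1) < 1"
proof -
  define j where "j = \<lceil>c1 - e1\<rceil>"
  have j: "c1 \<le> e1 + of_int j" "e1 + of_int j < c1 + 1"
    unfolding j_def by linarith+
  have "e1 \<in> carc e1 e2" "c1 + 1 \<in> carc c1 c2"
    using assms by (auto simp: carc_def intro: exI[of _ 0] exI[of _ "-1"])
  then have "e1 \<notin> carc c1 c2" "c1 + 1 \<notin> carc e1 e2"
    using assms(5) by blast+
  then have "c2 < e1 + of_int j" "e2 + of_int j < c1 + 1"
    using j unfolding carc_def by (force, force intro: exI[of _ "-j"])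
  then show ?thesis by linarith
qed

text \<open>Consecutive lifts of \<open>C\<close> are separated by a lift of \<open>E\<close>.\<close>
lemma same_lift_if_close:
  assumes "c1 < c2" "c2 < c1 + 1" "e1 < e2" "e2 < e1 + 1" "carc c1 c2 \<inter> carc e1 e2 = {}"
    and "x \<in> {c1 + of_int k..c2 + of_int k}" "x' \<in> {c1 + of_int k'..c2 + of_int k'}"
    and "\<bar>x - x'\<bar> < e2 - e1"
  shows "k = k'"
proof (rule ccontr)
  assume "k \<noteq> k'"
  then have "of_int k' \<ge> of_int k + (1::real) \<or> of_int k \<ge> of_int k' + (1::real)"
    by linarith
  then show False
    using assms(6-8) carc_length_add_lt_1[OF assms(1-5)] by (auto simp: abs_if split: if_splits)
qed

lemma lift_endpoint_notin_oarc:
  assumes "c1 < c2" "c2 < c1 + 1" "w = c1 + of_int m \<or> w = c2 + of_int m"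
  shows "w \<notin> oarc c1 c2"
proof
  assume "w \<in> oarc c1 c2"
  then obtain j where "c1 < w + of_int j" "w + of_int j < c2"
    unfolding oarc_def by blast
  then have "0 < real_of_int (m + j) \<and> real_of_int (m + j) < 1 \<or>
      -1 < real_of_int (m + j) \<and> real_of_int (m + j) < 0"
    using assms by auto
  then have "0 < m + j \<and> m + j < 1 \<or> -1 < m + j \<and> m + j < 0"
    by linarith
  then show False by linarith
qed

lemma continuous_into_oarc_single_lift:
  fixes h :: "real \<Rightarrow> real"
  assumes cont: "continuous_on {c1..c2} h" and C: "c1 < c2" "c2 < c1 + 1"
    and into: "\<And>u. u \<in> {c1..c2} \<Longrightarrow> h u \<in> oarc c1 c2"
  shows "\<exists>k. h ` {c1..c2} \<subseteq> {c1 + of_int k<..<c2 + of_int k}"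
proof -
  obtain j where j: "c1 < h c1 + of_int j" "h c1 + of_int j < c2"
    using into[of c1] C unfolding oarc_def by force
  have "h u \<in> {c1 - of_int j<..<c2 - of_int j}" if u: "u \<in> {c1..c2}" for u
  proof (rule ccontr)
    have co: "continuous_on {c1..u} h"
      using cont continuous_on_subset u by fastforce
    assume "h u \<notin> {c1 - of_int j<..<c2 - of_int j}"
    then obtain w where "w \<in> {c1..u}" and "h w = c1 + of_int (-j) \<or> h w = c2 + of_int (-j)"
      using IVT'[of h c1 "c2 + of_int (-j)" u] IVT2'[of h u "c1 + of_int (-j)" c1] j u co
      by (force simp: not_less)
    then show False
      using lift_endpoint_notin_oarc[OF C, of "h w" "-j"] into[of w] u by auto
  qed
  then show ?thesis by (auto intro: exI[of _ "-j"])
qed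

lemma powr_recurrence_bound:
  fixes D b :: "nat \<Rightarrow> real" and a c :: real
  assumes "a > 0" and step: "\<And>j. D (Suc j) \<le> a powr b j * D j + c"
  shows "D n \<le> a powr (\<Sum>j<n. b j) * D 0 + c * (\<Sum>k = 1..n. a powr (\<Sum>j\<in>{k..<n}. b j))"
proof (induction n)
  case (Suc n)
  have tail: "(\<Sum>k = 1..Suc n. a powr (\<Sum>j\<in>{k..<Suc n}. b j))
      = a powr b n * (\<Sum>k = 1..n. a powr (\<Sum>j\<in>{k..<n}. b j)) + 1"
  proof -
    have "(\<Sum>k = 1..n. a powr (\<Sum>j\<in>{k..<Suc n}. b j)) = (\<Sum>k = 1..n. a powr b n * a powr (\<Sum>j\<in>{k..<n}. b j))"
      by (intro sum.cong refl) (auto simp: powr_add add.commute)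
    then show ?thesis
      using \<open>a > 0\<close> by (simp add: sum_distrib_left)
  qed
  have "D (Suc n) \<le> a powr b n * D n + c"
    by (rule step)
  also have "\<dots> \<le> a powr b n * (a powr (\<Sum>j<n. b j) * D 0 + c * (\<Sum>k = 1..n. a powr (\<Sum>j\<in>{k..<n}. b j))) + c"
    using Suc.IH by (simp add: mult_left_mono)
  also have "\<dots> = a powr (\<Sum>j<Suc n. b j) * D 0 + c * (\<Sum>k = 1..Suc n. a powr (\<Sum>j\<in>{k..<Suc n}. b j))"
    unfolding tail by (simp add: powr_add algebra_simps)
  finally show ?case .
qed (use \<open>a > 0\<close> in simp)

lemma card_int_interval_Suc:
  "card {m::int. -1 \<le> m \<and> m < int (Suc n) - 1 \<and> Q m} =
   card {m::int. -1 \<le> m \<and> m < int n - 1 \<and> Q m} + (if Q (int n - 1) then 1 else 0)"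
proof -
  have fin: "finite {m::int. -1 \<le> m \<and> m < int n - 1 \<and> Q m}"
    by (rule finite_subset[of _ "{-1..int n}"]) auto
  have "-1 \<le> m \<and> m < int (Suc n) - 1 \<and> Q m \<longleftrightarrow>
      -1 \<le> m \<and> m < int n - 1 \<and> Q m \<or> m = int n - 1 \<and> Q m" for m
    by (cases "m = int n - 1") auto
  then have "{m::int. -1 \<le> m \<and> m < int (Suc n) - 1 \<and> Q m} =
      (if Q (int n - 1) then insert (int n - 1) else id) {m::int. -1 \<le> m \<and> m < int n - 1 \<and> Q m}"
    by (simp only: Collect_disj_eq) auto
  then show ?thesis
    using fin by simp
qed

lemma card_int_interval_eq_sum:
  "card {m::int. -1 \<le> m \<and> m < int n - 1 \<and> Q m} = (\<Sum>i<n. if Q (int i - 1) then 1 else 0)"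
proof (induction n)
  case 0
  then show ?case by (simp add: card_eq_0_iff)
next
  case (Suc n)
  then show ?case
    using card_int_interval_Suc[of n Q] by simp
qed

definition contraction_time ::
  "real \<Rightarrow> (real \<Rightarrow> real) \<Rightarrow> real \<Rightarrow> real \<Rightarrow> real set \<Rightarrow> real \<Rightarrow> real \<Rightarrow> int \<Rightarrow> bool" where
  "contraction_time \<omega> \<phi> c1 c2 I0 \<eta> \<eta>' m \<longleftrightarrow>
     \<phi> (\<eta> + of_int m * \<omega>) \<in> carc c1 c2 \<and> \<phi> (\<eta>' + of_int m * \<omega>) \<in> carc c1 c2 \<and>
     \<eta> + of_int m * \<omega> \<notin> I0 \<and> \<eta>' + of_int m * \<omega> \<notin> I0"

lemma wp_eq_sum:
  "wp \<omega> \<phi> c1 c2 I0 n \<eta> \<eta>' = (\<Sum>i<n. if contraction_time \<omega> \<phi> c1 c2 I0 \<eta> \<eta>' (int i - 1) then 1 else 0)"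
  unfolding wp_def contraction_time_def by (rule card_int_interval_eq_sum)

lemma exponent_sum_eq_wp:
  "(\<Sum>j<n. if contraction_time \<omega> \<phi> c1 c2 I0 \<eta> \<eta>' (int j - 1) then -1 else 2 :: real)
     = 2 * real n - 3 * real (wp \<omega> \<phi> c1 c2 I0 n \<eta> \<eta>')"
proof -
  let ?P = "\<lambda>j. contraction_time \<omega> \<phi> c1 c2 I0 \<eta> \<eta>' (int j - 1)"
  have "(\<Sum>j<n. if ?P j then -1 else 2 :: real) = (\<Sum>j<n. 2 - 3 * (if ?P j then 1 else 0))"
    by (intro sum.cong) auto
  also have "\<dots> = 2 * real n - 3 * real (\<Sum>j<n. if ?P j then 1 else 0)"
    by (simp add: sum_subtractf sum_distrib_left[symmetric] of_nat_sum) (rule sum.cong; simp)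
  finally show ?thesis
    by (simp only: wp_eq_sum)
qed

lemma exponent_sum_shift_eq_wp:
  "(\<Sum>j\<in>{k..<n}. if contraction_time \<omega> \<phi> c1 c2 I0 \<eta> \<eta>' (int j - 1) then -1 else 2 :: real)
     = 2 * real (n - k) - 3 * real (wp \<omega> \<phi> c1 c2 I0 (n - k) (\<eta> + real k * \<omega>) (\<eta>' + real k * \<omega>))"
proof -
  have orbit: "x + real k * \<omega> + of_int (int i - 1) * \<omega> = x + of_int (int (k + i) - 1) * \<omega>" for x i
    by (simp add: algebra_simps)
  have "(\<Sum>j\<in>{k..<n}. if contraction_time \<omega> \<phi> c1 c2 I0 \<eta> \<eta>' (int j - 1) then -1 else 2 :: real)
      = (\<Sum>i<n - k. if contraction_time \<omega> \<phi> c1 c2 I0 (\<eta> + real k * \<omega>) (\<eta>' + real k * \<omega>) (int i - 1)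
                      then -1 else 2)"
    unfolding sum.atLeastLessThan_shift_0[of _ k n] lessThan_atLeast0 contraction_time_def orbit
    by (simp only: comp_def)
  also have "\<dots> = 2 * real (n - k)
      - 3 * real (wp \<omega> \<phi> c1 c2 I0 (n - k) (\<eta> + real k * \<omega>) (\<eta>' + real k * \<omega>))"
    by (rule exponent_sum_eq_wp[of \<omega> \<phi> c1 c2 I0 "\<eta> + real k * \<omega>" "\<eta>' + real k * \<omega>" "n - k"])
  finally show ?thesis .
qed

locale fibre_contraction =
  fixes g :: "real \<Rightarrow> real \<Rightarrow> real" and c1 c2 e1 e2 \<alpha> S :: real and I0 :: "real set"
  assumes degree_one: "\<And>t x. g t (x + 1) = g t x + 1"
    and fibre_deriv: "\<And>t x. (g t has_real_derivative deriv (g t) x) (at x)"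
    and C_arc: "c1 < c2" "c2 < c1 + 1" and E_arc: "e1 < e2" "e2 < e1 + 1"
    and C_E_disjoint: "carc c1 c2 \<inter> carc e1 e2 = {}"
    and outside_E_into_C: "\<And>t x. x \<notin> oarc e1 e2 \<Longrightarrow> t \<notin> I0 \<Longrightarrow> g t x \<in> oarc c1 c2"
    and fibre_lipschitz: "\<And>t x x'. tdist (g t x) (g t x') \<le> \<alpha>\<^sup>2 * tdist x x'"
    and base_lipschitz: "\<And>t t' x. tdist (g t x) (g t' x) \<le> S * tdist t t'"
    and deriv_on_C: "\<And>t x. x \<in> carc c1 c2 \<Longrightarrow> \<bar>deriv (g t) x\<bar> \<le> 1 / \<alpha>"
    and alpha_gt_4: "\<alpha> > 4"
begin

lemma g_add_int: "g t (x + of_int k) = g t x + of_int k"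
  by (rule degree_one_add_int) (rule degree_one)

lemma contraction_on_lift_of_C:
  assumes "u \<in> {c1 + of_int k..c2 + of_int k}" "v \<in> {c1 + of_int k..c2 + of_int k}"
  shows "\<bar>g t u - g t v\<bar> \<le> \<bar>u - v\<bar> / \<alpha>"
proof -
  have "\<bar>deriv (g t) z\<bar> \<le> 1 / \<alpha>" if "z \<in> {c1 + of_int k..c2 + of_int k}" for z
    using that by (intro deriv_on_C) (auto simp: carc_def intro: exI[of _ "-k"])
  then have "norm (g t u - g t v) \<le> 1 / \<alpha> * norm (u - v)"
    by (intro field_differentiable_bound[OF convex_real_interval(5) _ _ assms])
      (auto intro: has_field_derivative_at_within fibre_deriv)
  then show ?thesis by simp
qed

lemma C_into_lift_of_C:
  assumes "t \<notin> I0"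
  obtains k where "\<And>u. u \<in> {c1..c2} \<Longrightarrow> g t u \<in> {c1 + of_int k<..<c2 + of_int k}"
proof -
  have "continuous_on {c1..c2} (g t)"
    using fibre_deriv by (meson DERIV_isCont continuous_at_imp_continuous_on)
  moreover have "g t u \<in> oarc c1 c2" if "u \<in> {c1..c2}" for u
    using that C_E_disjoint oarc_subset_carc mem_carc_if_between[of c1 u c2]
    by (intro outside_E_into_C assms) auto
  ultimately show thesis
    using continuous_into_oarc_single_lift[OF _ C_arc] that by blast
qed

lemma contraction_after_C_normalized:
  assumes "t \<notin> I0" "t' \<notin> I0" "y \<in> {c1..c2}" "y' \<in> {c1..c2}"
    and close: "S * tdist t t' < (e2 - e1) / 4"
  shows "tdist (g s (g t y)) (g s (g t' y')) \<le> tdist (g t y) (g t' y') / \<alpha>"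
proof -
  obtain k where k: "\<And>u. u \<in> {c1..c2} \<Longrightarrow> g t u \<in> {c1 + of_int k<..<c2 + of_int k}"
    using C_into_lift_of_C[OF assms(1)] by blast
  obtain k' where k': "\<And>u. u \<in> {c1..c2} \<Longrightarrow> g t' u \<in> {c1 + of_int k'<..<c2 + of_int k'}"
    using C_into_lift_of_C[OF assms(2)] by blast
  define x z x' where "x = g t y" and "z = g t y'" and "x' = g t' y'"
  define r where "r = round (z - x')"
  define x'' where "x'' = x' + of_int r" \<comment> \<open>the lift of \<open>x'\<close> nearest to \<open>z\<close>\<close>
  have x: "x \<in> {c1 + of_int k..c2 + of_int k}" and z: "z \<in> {c1 + of_int k..c2 + of_int k}"
    and x'': "x'' \<in> {c1 + of_int (k' + r)..c2 + of_int (k' + r)}"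
    using k[OF assms(3)] k[OF assms(4)] k'[OF assms(4)] by (auto simp: x_def z_def x''_def x'_def)
  have "\<bar>x - z\<bar> \<le> \<bar>y - y'\<bar> / \<alpha>"
    unfolding x_def z_def using contraction_on_lift_of_C[of y 0 y'] assms(3,4) by simp
  also have "\<dots> < 1 / 4"
    using assms(3,4) C_arc alpha_gt_4 by (auto simp: field_simps abs_if)
  finally have xz: "\<bar>x - z\<bar> < 1 / 4" .
  have "\<bar>z - x''\<bar> = tdist z x'"
    by (simp add: x''_def r_def tdist_def algebra_simps)
  also have "\<dots> \<le> S * tdist t t'"
    unfolding z_def x'_def by (rule base_lipschitz)
  finally have zx'': "\<bar>z - x''\<bar> < (e2 - e1) / 4"
    using close by linarith
  have "k' + r = k"
    using same_lift_if_close[OF C_arc E_arc C_E_disjoint z x''] zx'' E_arc by simp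
  then have x''_k: "x'' \<in> {c1 + of_int k..c2 + of_int k}"
    using x'' by simp
  have "\<bar>x - x''\<bar> < 1 / 2"
    using xz zx'' E_arc by (auto simp: abs_if split: if_splits)
  then have "tdist x x' = \<bar>x - x''\<bar>"
    using tdist_eq_abs[of x x''] by (simp add: x''_def)
  moreover have "tdist (g s x) (g s x') \<le> \<bar>x - x''\<bar> / \<alpha>"
    using tdist_le_abs[of "g s x" "g s x''"] contraction_on_lift_of_C[OF x x''_k, of s]
    by (simp add: x''_def g_add_int)
  ultimately show ?thesis
    by (simp add: x_def x'_def)
qed

lemma contraction_after_C:
  assumes "t \<notin> I0" "t' \<notin> I0" "y \<in> carc c1 c2" "y' \<in> carc c1 c2"
    and "S * tdist t t' < (e2 - e1) / 4"
  shows "tdist (g s (g t y)) (g s (g t' y')) \<le> tdist (g t y) (g t' y') / \<alpha>"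
proof -
  obtain j j' where "y + of_int j \<in> {c1..c2}" "y' + of_int j' \<in> {c1..c2}"
    using assms(3,4) unfolding carc_def by auto
  from contraction_after_C_normalized[OF assms(1,2) this assms(5)] show ?thesis
    by (simp add: g_add_int)
qed

lemma graph_distance_step:
  assumes inv: "\<And>m::int. frac (\<phi> (\<theta> + of_int m * \<omega> + \<omega>)) = frac (g (\<theta> + of_int m * \<omega>) (\<phi> (\<theta> + of_int m * \<omega>)))"
      "\<And>m::int. frac (\<phi> (\<theta>' + of_int m * \<omega> + \<omega>)) = frac (g (\<theta>' + of_int m * \<omega>) (\<phi> (\<theta>' + of_int m * \<omega>)))"
    and close: "S * tdist \<theta> \<theta>' < (e2 - e1) / 4"
  shows "tdist (\<phi> (\<theta> + real (Suc j) * \<omega>)) (\<phi> (\<theta>' + real (Suc j) * \<omega>))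
      \<le> \<alpha> powr (if contraction_time \<omega> \<phi> c1 c2 I0 \<theta> \<theta>' (int j - 1) then -1 else 2)
          * tdist (\<phi> (\<theta> + real j * \<omega>)) (\<phi> (\<theta>' + real j * \<omega>)) + S * tdist \<theta> \<theta>'"
proof -
  define u u' where "u = \<theta> + of_int (int j - 1) * \<omega>" and "u' = \<theta>' + of_int (int j - 1) * \<omega>"
  define t t' where "t = \<theta> + of_int (int j) * \<omega>" and "t' = \<theta>' + of_int (int j) * \<omega>"
  have orbit: "u + \<omega> = t" "u' + \<omega> = t'"
      "t + \<omega> = \<theta> + real (Suc j) * \<omega>" "t' + \<omega> = \<theta>' + real (Suc j) * \<omega>"
    by (simp_all add: u_def u'_def t_def t'_def algebra_simps)
  have inv_u: "frac (\<phi> t) = frac (g u (\<phi> u))" "frac (\<phi> t') = frac (g u' (\<phi> u'))"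
    using inv(1)[of "int j - 1", folded u_def] inv(2)[of "int j - 1", folded u'_def] orbit
    by simp_all
  have inv_t: "frac (\<phi> (\<theta> + real (Suc j) * \<omega>)) = frac (g t (\<phi> t))"
      "frac (\<phi> (\<theta>' + real (Suc j) * \<omega>)) = frac (g t' (\<phi> t'))"
    using inv(1)[of "int j", folded t_def] inv(2)[of "int j", folded t'_def] orbit
    by simp_all
  have dist: "tdist u u' = tdist \<theta> \<theta>'" "tdist t t' = tdist \<theta> \<theta>'"
    by (simp_all add: u_def u'_def t_def t'_def tdist_translate)
  have "tdist (\<phi> (\<theta> + real (Suc j) * \<omega>)) (\<phi> (\<theta>' + real (Suc j) * \<omega>))
      = tdist (g t (\<phi> t)) (g t' (\<phi> t'))"
    using inv_t by (rule tdist_frac_cong)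
  also have "\<dots> \<le> tdist (g t (\<phi> t)) (g t (\<phi> t')) + tdist (g t (\<phi> t')) (g t' (\<phi> t'))"
    by (rule tdist_triangle)
  finally have triangle: "tdist (\<phi> (\<theta> + real (Suc j) * \<omega>)) (\<phi> (\<theta>' + real (Suc j) * \<omega>))
      \<le> tdist (g t (\<phi> t)) (g t (\<phi> t')) + tdist (g t (\<phi> t')) (g t' (\<phi> t'))" .
  have base: "tdist (g t (\<phi> t')) (g t' (\<phi> t')) \<le> S * tdist \<theta> \<theta>'"
    using base_lipschitz[of t "\<phi> t'" t'] dist by simp
  have fibre: "tdist (g t (\<phi> t)) (g t (\<phi> t'))
      \<le> \<alpha> powr (if contraction_time \<omega> \<phi> c1 c2 I0 \<theta> \<theta>' (int j - 1) then -1 else 2)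
          * tdist (\<phi> t) (\<phi> t')"
  proof (cases "contraction_time \<omega> \<phi> c1 c2 I0 \<theta> \<theta>' (int j - 1)")
    case True
    then have in_C: "\<phi> u \<in> carc c1 c2" "\<phi> u' \<in> carc c1 c2" "u \<notin> I0" "u' \<notin> I0"
      unfolding contraction_time_def u_def u'_def by auto
    obtain K K' where "\<phi> t = g u (\<phi> u) + of_int K" "\<phi> t' = g u' (\<phi> u') + of_int K'"
      using frac_eq_imp_add_int inv_u by metis
    then have "tdist (g t (\<phi> t)) (g t (\<phi> t')) = tdist (g t (g u (\<phi> u))) (g t (g u' (\<phi> u')))"
      and "tdist (g u (\<phi> u)) (g u' (\<phi> u')) = tdist (\<phi> t) (\<phi> t')"
      by (simp_all add: g_add_int)
    moreover have "tdist (g t (g u (\<phi> u))) (g t (g u' (\<phi> u')))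
        \<le> tdist (g u (\<phi> u)) (g u' (\<phi> u')) / \<alpha>"
      using close dist by (intro contraction_after_C in_C) auto
    ultimately show ?thesis
      using True alpha_gt_4 by (simp add: powr_minus_divide)
  next
    case False
    then show ?thesis
      using fibre_lipschitz alpha_gt_4 by simp
  qed
  have "tdist (\<phi> t) (\<phi> t') = tdist (\<phi> (\<theta> + real j * \<omega>)) (\<phi> (\<theta>' + real j * \<omega>))"
    by (simp add: t_def t'_def)
  then show ?thesis
    using triangle base fibre by simp
qed

lemma graph_distance_bound:
  assumes inv: "\<And>m::int. frac (\<phi> (\<theta> + of_int m * \<omega> + \<omega>)) = frac (g (\<theta> + of_int m * \<omega>) (\<phi> (\<theta> + of_int m * \<omega>)))"
      "\<And>m::int. frac (\<phi> (\<theta>' + of_int m * \<omega> + \<omega>)) = frac (g (\<theta>' + of_int m * \<omega>) (\<phi> (\<theta>' + of_int m * \<omega>)))"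
    and close: "S * tdist \<theta> \<theta>' < (e2 - e1) / 4"
  shows "tdist (\<phi> (\<theta> + real n * \<omega>)) (\<phi> (\<theta>' + real n * \<omega>))
           \<le> \<alpha> powr (2 * real n - 3 * real (wp \<omega> \<phi> c1 c2 I0 n \<theta> \<theta>')) * tdist (\<phi> \<theta>) (\<phi> \<theta>')
             + S * tdist \<theta> \<theta>' *
               (\<Sum>k = 1..n. \<alpha> powr (2 * real (n - k)
                   - 3 * real (wp \<omega> \<phi> c1 c2 I0 (n - k) (\<theta> + real k * \<omega>) (\<theta>' + real k * \<omega>))))"
proof -
  define D where "D j = tdist (\<phi> (\<theta> + real j * \<omega>)) (\<phi> (\<theta>' + real j * \<omega>))" for j :: nat
  define b where "b j = (if contraction_time \<omega> \<phi> c1 c2 I0 \<theta> \<theta>' (int j - 1) then -1 else 2 :: real)"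
    for j :: nat
  have "D (Suc j) \<le> \<alpha> powr b j * D j + S * tdist \<theta> \<theta>'" for j
    unfolding D_def b_def by (rule graph_distance_step[OF inv close])
  from powr_recurrence_bound[where D = D and b = b, OF _ this] alpha_gt_4
  have "D n \<le> \<alpha> powr (\<Sum>j<n. b j) * D 0 + S * tdist \<theta> \<theta>' * (\<Sum>k = 1..n. \<alpha> powr (\<Sum>j\<in>{k..<n}. b j))"
    by simp
  moreover have "(\<Sum>k = 1..n. \<alpha> powr (\<Sum>j\<in>{k..<n}. b j))
      = (\<Sum>k = 1..n. \<alpha> powr (2 * real (n - k)
                   - 3 * real (wp \<omega> \<phi> c1 c2 I0 (n - k) (\<theta> + real k * \<omega>) (\<theta>' + real k * \<omega>))))"
    by (intro sum.cong refl) (simp add: b_def exponent_sum_shift_eq_wp)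
  ultimately show ?thesis
    by (simp add: D_def b_def exponent_sum_eq_wp)
qed

end

theorem mainTheorem6:
  fixes \<omega> :: real and g :: "real \<Rightarrow> real \<Rightarrow> real"
    and c1 c2 e1 e2 \<alpha> S s \<theta> \<theta>' :: real and I0 :: "real set"
    and N \<kappa> K0 :: nat and M :: "nat \<Rightarrow> nat" and \<epsilon> :: "nat \<Rightarrow> real"
    and phip phim :: "real \<Rightarrow> real" and n :: nat
  assumes "\<omega> \<notin> \<rat>"
    and "V_data \<omega> g c1 c2 e1 e2 I0 N \<alpha> S \<kappa> K0 M \<epsilon> s phip phim"
    and "tdist \<theta> \<theta>' < (e2 - e1) / (4 * S)"
    and "\<forall>m::int. frac (phip (\<theta> + of_int m * \<omega> + \<omega>)) = frac (g (\<theta> + of_int m * \<omega>) (phip (\<theta> + of_int m * \<omega>)))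
               \<and> frac (phip (\<theta>' + of_int m * \<omega> + \<omega>)) = frac (g (\<theta>' + of_int m * \<omega>) (phip (\<theta>' + of_int m * \<omega>)))"
    and "n \<ge> 1"
  shows "tdist (phip (\<theta> + real n * \<omega>)) (phip (\<theta>' + real n * \<omega>))
           \<le> \<alpha> powr (2 * real n - 3 * real (wp \<omega> phip c1 c2 I0 n \<theta> \<theta>')) * tdist (phip \<theta>) (phip \<theta>')
             + S * tdist \<theta> \<theta>' *
               (\<Sum>k = 1..n. \<alpha> powr (2 * real (n - k)
                   - 3 * real (wp \<omega> phip c1 c2 I0 (n - k) (\<theta> + real k * \<omega>) (\<theta>' + real k * \<omega>))))"
proof -
  note V = assms(2)[unfolded V_data_def]
  have skew: "skew_class \<omega> g" and S_pos: "S > 0"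
    using V by blast+
  interpret fibre_contraction g c1 c2 e1 e2 \<alpha> S I0
  proof
    show "g t (x + 1) = g t x + 1" for t x
      using skew unfolding skew_class_def by blast
    show "(g t has_real_derivative deriv (g t) x) (at x)" for t x
      using skew by (rule skew_class_fibre_deriv)
  qed (use V in blast)+
  have "S * tdist \<theta> \<theta>' < (e2 - e1) / 4"
    using assms(3) S_pos by (simp add: field_simps)
  with assms(4) show ?thesis
    by (intro graph_distance_bound) blast+
qed

end
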